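(* Let $X=X(\Delta)$ be a smooth projective toric variety of dimension $n$ with rays $\rho_1,\dots,\rho_{n+r}$, and suppose there is a maximal cone $\sigma_0$ with $\sigma_0(1)=\{\rho_1,\dots,\rho_n\}$ such that every $\rho_{n+j}$ ($1\le j\le r$) is a combination of $\rho_1,\dots,\rho_n$ with non-positive coefficients. Write $\mathcal{P}_{n+j}:\rho_{n+j}+\sum_{i=1}^n\mathfrak{b}_{i,j}\rho_i=0$ ($1\le j\le r$). Then these are positive relations (all $\mathfrak{b}_{i,j}\in\mathbb{Z}_{\ge0}$). If $L=\mathcal{O}_X(D)$ with $D=\sum_{i=1}^{n+r}\mathfrak{a}_iD_{\rho_i}$ is globally generated, then $$\deg_L(\mathcal{P}_{n+j})=\mathfrak{a}_{n+j}+\sum_{i=1}^n\mathfrak{a}_i\mathfrak{b}_{i,j}\ge\beta,$$ where $\beta$ is the minimal $L$-degree of centred primitive relations.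
   Context: Rays are identified with primitive generators; $D_\rho$ is the torus-invariant divisor of $\rho$. A relation $\sum c_\rho\rho=0$ ($c_\rho\in\mathbb{Z}$, not all zero) is positive if all $c_\rho\ge0$. For $D=\sum a_\rho D_\rho$, $\phi_D$ equals $\langle m_D(\sigma),\cdot\rangle$ on each maximal cone $\sigma$, where $\langle m_D(\sigma),\rho\rangle=-a_\rho$ for $\rho\in\sigma(1)$; the $L$-degree of a relation $\sum c_\rho\rho=0$ is $-\sum c_\rho\phi_D(\rho)$. A primitive collection is a set of rays not generating a cone while every proper subset does; it is centred if its elements sum to $0$, giving the centred primitive relation $\sum_{\rho\in\mathcal{I}}\rho=0$. *)

theory Defs
  imports "HOL-Analysis.Analysis"
begin

(* Lattice N = Z^n inside real^'n (n = CARD('n)); dual lattice M identified with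
   real^'n via the standard inner product.  Rays are indexed by natural numbers
   through u :: nat => real^'n; cones of the fan are encoded by sets of ray indices. *)

definition integral_vec :: "real^'n \<Rightarrow> bool" where
  "integral_vec v \<longleftrightarrow> (\<forall>i. v $ i \<in> \<int>)"

definition primitive_vec :: "real^'n \<Rightarrow> bool" where
  "primitive_vec v \<longleftrightarrow> integral_vec v \<and> v \<noteq> 0 \<and>
     (\<forall>(k::int) w. integral_vec w \<and> v = of_int k *\<^sub>R w \<longrightarrow> \<bar>k\<bar> = 1)"

definition cone_gen :: "(nat \<Rightarrow> real^'n) \<Rightarrow> nat set \<Rightarrow> (real^'n) set" where
  "cone_gen u S = {(\<Sum>i\<in>S. t i *\<^sub>R u i) | t. \<forall>i\<in>S. t i \<ge> 0}"

definition unimodular :: "(nat \<Rightarrow> real^'n) \<Rightarrow> nat set \<Rightarrow> bool" where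
  "unimodular u S \<longleftrightarrow> card S = CARD('n) \<and>
     (\<forall>v. integral_vec v \<longrightarrow> (\<exists>c::nat \<Rightarrow> int. v = (\<Sum>i\<in>S. of_int (c i) *\<^sub>R u i)))"

definition max_cone :: "nat set set \<Rightarrow> nat set \<Rightarrow> bool" where
  "max_cone C S \<longleftrightarrow> S \<in> C \<and> card S = CARD('n::finite)"

definition mD :: "(nat \<Rightarrow> real^'n) \<Rightarrow> (nat \<Rightarrow> int) \<Rightarrow> nat set \<Rightarrow> real^'n" where
  "mD u a S = (THE m. \<forall>i\<in>S. m \<bullet> u i = - of_int (a i))"

definition phiD :: "(nat \<Rightarrow> real^'n) \<Rightarrow> nat set set \<Rightarrow> (nat \<Rightarrow> int) \<Rightarrow> real^'n \<Rightarrow> real" where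
  "phiD u C a v = mD u a (SOME S. max_cone TYPE('n) C S \<and> v \<in> cone_gen u S) \<bullet> v"

definition smooth_complete_fan ::
    "(nat \<Rightarrow> real^'n) \<Rightarrow> nat set \<Rightarrow> nat set set \<Rightarrow> bool" where
  "smooth_complete_fan u I C \<longleftrightarrow>
     finite I \<and> inj_on u I \<and> (\<forall>i\<in>I. primitive_vec (u i)) \<and>
     C \<subseteq> Pow I \<and> (\<forall>S\<in>C. \<forall>T. T \<subseteq> S \<longrightarrow> T \<in> C) \<and>
     (\<forall>i\<in>I. {i} \<in> C) \<and>
     (\<forall>S\<in>C. \<exists>T\<in>C. S \<subseteq> T \<and> unimodular u T) \<and>
     (\<forall>S\<in>C. \<forall>T\<in>C. cone_gen u S \<inter> cone_gen u T = cone_gen u (S \<inter> T)) \<and>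
     (\<Union>S\<in>C. cone_gen u S) = UNIV"

text \<open>D = sum a_i D_i is globally generated iff each m_D(sigma) lies in P_D.\<close>
definition globally_generated ::
    "(nat \<Rightarrow> real^'n) \<Rightarrow> nat set \<Rightarrow> nat set set \<Rightarrow> (nat \<Rightarrow> int) \<Rightarrow> bool" where
  "globally_generated u I C a \<longleftrightarrow>
     (\<forall>S. max_cone TYPE('n) C S \<longrightarrow> (\<forall>j\<in>I. mD u a S \<bullet> u j \<ge> - of_int (a j)))"

text \<open>D is ample: phi_D strictly convex (strict inequalities off the cone).\<close>
definition ample ::
    "(nat \<Rightarrow> real^'n) \<Rightarrow> nat set \<Rightarrow> nat set set \<Rightarrow> (nat \<Rightarrow> int) \<Rightarrow> bool" where
  "ample u I C a \<longleftrightarrow>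
     (\<forall>S. max_cone TYPE('n) C S \<longrightarrow> (\<forall>j\<in>I - S. mD u a S \<bullet> u j > - of_int (a j)))"

definition smooth_projective_fan ::
    "(nat \<Rightarrow> real^'n) \<Rightarrow> nat set \<Rightarrow> nat set set \<Rightarrow> bool" where
  "smooth_projective_fan u I C \<longleftrightarrow> smooth_complete_fan u I C \<and> (\<exists>a. ample u I C a)"

definition is_relation :: "(nat \<Rightarrow> real^'n) \<Rightarrow> nat set \<Rightarrow> (nat \<Rightarrow> int) \<Rightarrow> bool" where
  "is_relation u I c \<longleftrightarrow> (\<Sum>i\<in>I. of_int (c i) *\<^sub>R u i) = 0 \<and> (\<exists>i\<in>I. c i \<noteq> 0)"

definition positive_relation :: "(nat \<Rightarrow> real^'n) \<Rightarrow> nat set \<Rightarrow> (nat \<Rightarrow> int) \<Rightarrow> bool" where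
  "positive_relation u I c \<longleftrightarrow> is_relation u I c \<and> (\<forall>i\<in>I. c i \<ge> 0)"

definition degL ::
    "(nat \<Rightarrow> real^'n) \<Rightarrow> nat set \<Rightarrow> nat set set \<Rightarrow> (nat \<Rightarrow> int) \<Rightarrow> (nat \<Rightarrow> int) \<Rightarrow> real" where
  "degL u I C a c = - (\<Sum>i\<in>I. of_int (c i) * phiD u C a (u i))"

definition primitive_collection :: "nat set \<Rightarrow> nat set set \<Rightarrow> nat set \<Rightarrow> bool" where
  "primitive_collection I C P \<longleftrightarrow> P \<subseteq> I \<and> P \<notin> C \<and> (\<forall>Q. Q \<subset> P \<longrightarrow> Q \<in> C)"

definition centred_primitive_collection ::
    "(nat \<Rightarrow> real^'n) \<Rightarrow> nat set \<Rightarrow> nat set set \<Rightarrow> nat set \<Rightarrow> bool" where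
  "centred_primitive_collection u I C P \<longleftrightarrow>
     primitive_collection I C P \<and> (\<Sum>i\<in>P. u i) = 0"

definition centred_rel :: "nat set \<Rightarrow> nat \<Rightarrow> int" where
  "centred_rel P = (\<lambda>i. if i \<in> P then 1 else 0)"

definition beta ::
    "(nat \<Rightarrow> real^'n) \<Rightarrow> nat set \<Rightarrow> nat set set \<Rightarrow> (nat \<Rightarrow> int) \<Rightarrow> real" where
  "beta u I C a = Min {degL u I C a (centred_rel P) | P. centred_primitive_collection u I C P}"

end

theory Submission
  imports Defs
begin

(* The coefficients b_ij are the negated coordinates of rho_(n+j) in the basis sigma0(1), hence
   nonnegative.  Any maximal cone containing rho_i has rho_i among its rays (cones meet along
   faces), so phi_D(rho_i) = -a_i and the L-degree of a relation c is simply sum c_i a_i.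

   The bound by beta is a descent.  Given a positive relation c, the support of c is not a cone,
   so it contains a primitive collection P.  If P is centred, c minus the indicator of P is still
   a nonnegative combination summing to 0, and global generation of D makes its degree
   nonnegative: the degree of c is at least that of P.  Otherwise sum_P rho is a nonnegative
   integral combination sum_T d_i rho_i over a maximal cone T not containing P; replacing P by d
   gives a new positive relation whose L-degree is not larger (global generation) and whose degree
   with respect to an ample divisor is strictly smaller (ampleness, since some ray of P is off T).
   The latter degree is a nonnegative integer, so the descent terminates in a centred primitive
   relation. *)

section \<open>Unimodular cones\<close>

lemma unimodular_finite:
  fixes u :: "nat \<Rightarrow> real^'n"
  assumes "unimodular u S"
  shows "finite S"
  using assms card.infinite by (fastforce simp: unimodular_def)

lemma unimodular_span:
  fixes u :: "nat \<Rightarrow> real^'n"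
  assumes "unimodular u S"
  shows "span (u ` S) = UNIV"
proof -
  have "b \<in> span (u ` S)" if "b \<in> Basis" for b :: "real^'n"
  proof -
    from that obtain k where "b = axis k 1"
      by (auto simp: Basis_vec_def)
    then have "integral_vec b"
      by (simp add: integral_vec_def axis_def)
    then obtain c :: "nat \<Rightarrow> int" where "b = (\<Sum>i\<in>S. of_int (c i) *\<^sub>R u i)"
      using assms by (auto simp: unimodular_def)
    then show ?thesis
      by (simp add: span_sum span_scale span_base)
  qed
  then have "span Basis \<subseteq> span (u ` S)"
    by (metis span_mono span_span subsetI)
  then show ?thesis
    by auto
qed

lemma unimodular_lincomb_eq_0:
  fixes u :: "nat \<Rightarrow> real^'n"
  assumes S: "unimodular u S" and sum_0: "(\<Sum>i\<in>S. c i *\<^sub>R u i) = 0" and "k \<in> S"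
  shows "c k = 0"
proof -
  have fin: "finite S"
    using S by (rule unimodular_finite)
  have "CARD('n) \<le> card (u ` S)"
    using span_card_ge_dim[of "u ` S" UNIV] unimodular_span[OF S] fin by auto
  moreover have "card (u ` S) \<le> card S"
    using fin by (rule card_image_le)
  ultimately have card_eq: "card (u ` S) = card S"
    using S by (simp add: unimodular_def)
  have inj: "inj_on u S"
    using eq_card_imp_inj_on[OF fin card_eq] .
  have "independent (u ` S)"
    using card_eq_dim[of "u ` S" UNIV] unimodular_span[OF S] fin card_eq S
    by (simp add: unimodular_def)
  moreover have "(\<Sum>v\<in>u ` S. c (the_inv_into S u v) *\<^sub>R v) = 0"
    using sum_0 inj by (simp add: sum.reindex the_inv_into_f_f)
  ultimately show "c k = 0"
    using \<open>k \<in> S\<close> inj by (auto simp: independent_explicit the_inv_into_f_f)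
qed

lemma unimodular_relation_coeffs_nonneg:
  fixes u :: "nat \<Rightarrow> real^'n"
  assumes S: "unimodular u S"
    and v: "\<exists>c. (\<forall>i\<in>S. c i \<le> 0) \<and> v = (\<Sum>i\<in>S. c i *\<^sub>R u i)"
    and rel: "v + (\<Sum>i\<in>S. b i *\<^sub>R u i) = 0" and "k \<in> S"
  shows "0 \<le> b k"
proof -
  obtain c where c: "\<forall>i\<in>S. c i \<le> 0" "v = (\<Sum>i\<in>S. c i *\<^sub>R u i)"
    using v by blast
  have "(\<Sum>i\<in>S. (c i + b i) *\<^sub>R u i) = 0"
    using rel c(2) by (simp add: scaleR_add_left sum.distrib)
  then have "c k + b k = 0"
    by (rule unimodular_lincomb_eq_0[OF S _ \<open>k \<in> S\<close>])
  then show ?thesis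
    using c(1) \<open>k \<in> S\<close> by fastforce
qed

lemma unimodular_inner_eq_imp_eq:
  fixes u :: "nat \<Rightarrow> real^'n"
  assumes "unimodular u S" and "\<forall>i\<in>S. m \<bullet> u i = m' \<bullet> u i"
  shows "m = m'"
proof -
  have "orthogonal (m - m') (m - m')"
    using orthogonal_to_span[of "m - m'" "u ` S" "m - m'"] unimodular_span[OF assms(1)] assms(2)
    by (auto simp: orthogonal_def inner_diff_left)
  then show ?thesis
    by (simp add: orthogonal_def)
qed

lemma unimodular_dual_exists:
  fixes u :: "nat \<Rightarrow> real^'n"
  assumes S: "unimodular u S"
  shows "\<exists>m. \<forall>i\<in>S. m \<bullet> u i = f i"
proof -
  obtain g where g: "bij_betw g (UNIV :: 'n set) S"
    using finite_same_card_bij[OF finite_class.finite_UNIV unimodular_finite[OF S]] S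
    by (auto simp: unimodular_def)
  define L where "L m = (\<chi> k. m \<bullet> u (g k))" for m :: "real^'n"
  have "linear L"
    by (rule linearI) (auto simp: L_def vec_eq_iff inner_add_left)
  moreover have "inj L"
  proof (rule injI)
    fix m m' assume "L m = L m'"
    then have "\<forall>i\<in>S. m \<bullet> u i = m' \<bullet> u i"
      using bij_betw_imp_surj_on[OF g] by (auto simp: L_def vec_eq_iff)
    then show "m = m'"
      by (rule unimodular_inner_eq_imp_eq[OF S])
  qed
  ultimately obtain m where m: "L m = (\<chi> k. f (g k))"
    by (metis linear_inj_imp_surj surjD)
  have "m \<bullet> u i = f i" if "i \<in> S" for i
    using m bij_betw_imp_surj_on[OF g] that by (auto simp: L_def vec_eq_iff)
  then show ?thesis
    by blast
qed

lemma mD_inner: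
  fixes u :: "nat \<Rightarrow> real^'n"
  assumes S: "unimodular u S" and "i \<in> S"
  shows "mD u a S \<bullet> u i = - of_int (a i)"
proof -
  obtain m where m: "\<forall>i\<in>S. m \<bullet> u i = - of_int (a i)"
    using unimodular_dual_exists[OF S, where f = "\<lambda>i. - of_int (a i)"] by blast
  have "\<forall>i\<in>S. mD u a S \<bullet> u i = - of_int (a i)"
    unfolding mD_def
  proof (rule theI[of _ m])
    fix m' assume "\<forall>i\<in>S. m' \<bullet> u i = - of_int (a i)"
    then show "m' = m"
      using m by (intro unimodular_inner_eq_imp_eq[OF S]) simp
  qed (rule m)
  then show ?thesis
    using \<open>i \<in> S\<close> by blast
qed

lemma unimodular_integral_cone_coeffs:
  fixes u :: "nat \<Rightarrow> real^'n"
  assumes S: "unimodular u S" and "integral_vec v" and "v \<in> cone_gen u S"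
  shows "\<exists>d::nat \<Rightarrow> int. v = (\<Sum>i\<in>S. of_int (d i) *\<^sub>R u i) \<and> (\<forall>i\<in>S. 0 \<le> d i)"
proof -
  obtain t where t: "v = (\<Sum>i\<in>S. t i *\<^sub>R u i)" "\<forall>i\<in>S. 0 \<le> t i"
    using \<open>v \<in> cone_gen u S\<close> by (auto simp: cone_gen_def)
  obtain d :: "nat \<Rightarrow> int" where d: "v = (\<Sum>i\<in>S. of_int (d i) *\<^sub>R u i)"
    using S \<open>integral_vec v\<close> by (auto simp: unimodular_def)
  have "(\<Sum>i\<in>S. (of_int (d i) - t i) *\<^sub>R u i) = 0"
    using d t by (simp add: scaleR_diff_left sum_subtractf)
  then have "of_int (d i) = t i" if "i \<in> S" for i
    using unimodular_lincomb_eq_0[OF S _ that] by fastforce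
  then show ?thesis
    using d t(2) by (metis of_int_0_le_iff)
qed

section \<open>Smooth complete fans\<close>

lemma cone_gen_mono:
  assumes "S \<subseteq> T" and "finite T"
  shows "cone_gen u S \<subseteq> cone_gen u T"
proof
  fix v assume "v \<in> cone_gen u S"
  then obtain t where t: "v = (\<Sum>i\<in>S. t i *\<^sub>R u i)" "\<forall>i\<in>S. 0 \<le> t i"
    by (auto simp: cone_gen_def)
  define t' where "t' i = (if i \<in> S then t i else 0)" for i
  have "v = (\<Sum>i\<in>T. t' i *\<^sub>R u i)"
    using assms t(1) by (auto simp: t'_def intro!: sum.mono_neutral_cong_left)
  moreover have "\<forall>i\<in>T. 0 \<le> t' i"
    using t(2) by (simp add: t'_def)
  ultimately show "v \<in> cone_gen u T"
    by (auto simp: cone_gen_def)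
qed

lemma exists_primitive_collection_subset:
  assumes "finite S" and "S \<subseteq> I" and "S \<notin> C"
  shows "\<exists>P\<subseteq>S. primitive_collection I C P"
proof -
  have "finite {P. P \<subseteq> S \<and> P \<notin> C}"
    using \<open>finite S\<close> by simp
  then obtain P where P: "P \<subseteq> S" "P \<notin> C"
    and "\<And>Q. Q \<subseteq> S \<Longrightarrow> Q \<notin> C \<Longrightarrow> Q \<subseteq> P \<Longrightarrow> P = Q"
    using finite_has_minimal[of "{P. P \<subseteq> S \<and> P \<notin> C}"] \<open>S \<notin> C\<close> by blast
  then have "Q \<in> C" if "Q \<subset> P" for Q
    using that by blast
  then show ?thesis
    using P \<open>S \<subseteq> I\<close> by (auto simp: primitive_collection_def)
qed

lemma sum_centred_rel:
  fixes u :: "nat \<Rightarrow> 'a::real_vector" and a :: "nat \<Rightarrow> int"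
  assumes "finite I" and "P \<subseteq> I"
  shows "(\<Sum>i\<in>I. of_int (centred_rel P i) *\<^sub>R u i) = (\<Sum>i\<in>P. u i)"
    and "(\<Sum>i\<in>I. centred_rel P i * a i) = (\<Sum>i\<in>P. a i)"
  using assms by (auto simp: centred_rel_def intro!: sum.mono_neutral_cong_right)

context
  fixes u :: "nat \<Rightarrow> real^'n" and I :: "nat set" and C :: "nat set set"
  assumes fan: "smooth_complete_fan u I C"
begin

lemma fan_finite_rays: "finite I"
  using fan by (simp add: smooth_complete_fan_def)

lemma fan_cone_subset_rays: "S \<in> C \<Longrightarrow> S \<subseteq> I"
  using fan by (auto simp: smooth_complete_fan_def)

lemma fan_face_in_fan: "S \<in> C \<Longrightarrow> T \<subseteq> S \<Longrightarrow> T \<in> C"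
  using fan by (auto simp: smooth_complete_fan_def)

lemma fan_ray_in_fan: "i \<in> I \<Longrightarrow> {i} \<in> C"
  using fan by (auto simp: smooth_complete_fan_def)

lemma fan_ray_primitive: "i \<in> I \<Longrightarrow> primitive_vec (u i)"
  using fan by (auto simp: smooth_complete_fan_def)

lemma fan_cone_gen_Int: "S \<in> C \<Longrightarrow> T \<in> C \<Longrightarrow> cone_gen u S \<inter> cone_gen u T = cone_gen u (S \<inter> T)"
  using fan by (auto simp: smooth_complete_fan_def)

lemma fan_covers: "\<exists>S\<in>C. v \<in> cone_gen u S"
  using fan by (auto simp: smooth_complete_fan_def)

lemma fan_max_cone_unimodular:
  assumes "max_cone TYPE('n) C S"
  shows "unimodular u S"
proof -
  obtain T where T: "T \<in> C" "S \<subseteq> T" "unimodular u T"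
    using fan assms by (auto simp: smooth_complete_fan_def max_cone_def)
  have "finite T"
    using T(1) fan_cone_subset_rays fan_finite_rays finite_subset by blast
  moreover have "card S = card T"
    using assms T(3) by (simp add: max_cone_def unimodular_def)
  ultimately show ?thesis
    using T card_subset_eq by blast
qed

lemma fan_cone_subset_max_cone:
  assumes "S \<in> C"
  shows "\<exists>T. max_cone TYPE('n) C T \<and> S \<subseteq> T"
  using fan assms by (fastforce simp: smooth_complete_fan_def max_cone_def unimodular_def)

lemma fan_max_cone_exists: "\<exists>T. max_cone TYPE('n) C T"
  using fan_covers fan_cone_subset_max_cone by blast

lemma fan_max_cone_subset_rays: "max_cone TYPE('n) C T \<Longrightarrow> T \<subseteq> I"
  by (simp add: fan_cone_subset_rays max_cone_def)

lemma phiD_ray: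
  assumes "i \<in> I"
  shows "phiD u C a (u i) = - of_int (a i)"
proof -
  have ray: "u i \<in> cone_gen u {i}"
    by (auto simp: cone_gen_def intro: exI[of _ "\<lambda>_. 1"])
  obtain T where T: "max_cone TYPE('n) C T" "{i} \<subseteq> T"
    using fan_cone_subset_max_cone fan_ray_in_fan assms by blast
  have "finite T"
    using T(1) fan_max_cone_subset_rays fan_finite_rays finite_subset by blast
  then have "u i \<in> cone_gen u T"
    using ray cone_gen_mono[OF T(2)] by blast
  with T(1) have ex: "\<exists>S. max_cone TYPE('n) C S \<and> u i \<in> cone_gen u S"
    by blast
  define S where "S = (SOME S. max_cone TYPE('n) C S \<and> u i \<in> cone_gen u S)"
  have S: "max_cone TYPE('n) C S" "u i \<in> cone_gen u S"
    using someI_ex[OF ex] unfolding S_def by auto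
  have "i \<in> S"
  proof (rule ccontr)
    assume "i \<notin> S"
    then have "u i \<in> cone_gen u {}"
      using fan_cone_gen_Int[of S "{i}"] S fan_ray_in_fan[OF assms] ray
      by (auto simp: max_cone_def)
    then show False
      using fan_ray_primitive[OF assms] by (simp add: cone_gen_def primitive_vec_def)
  qed
  then show ?thesis
    using mD_inner[OF fan_max_cone_unimodular[OF S(1)]] by (simp add: phiD_def S_def)
qed

lemma degL_eq_sum: "degL u I C a c = of_int (\<Sum>i\<in>I. c i * a i)"
  by (simp add: degL_def phiD_ray sum_negf)

lemma relation_support_not_in_fan:
  assumes "is_relation u I c"
  shows "{i\<in>I. c i \<noteq> 0} \<notin> C"
proof
  assume "{i\<in>I. c i \<noteq> 0} \<in> C"
  then obtain T where T: "max_cone TYPE('n) C T" "{i\<in>I. c i \<noteq> 0} \<subseteq> T"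
    using fan_cone_subset_max_cone by blast
  have "finite T"
    using T(1) fan_max_cone_subset_rays fan_finite_rays finite_subset by blast
  then have "(\<Sum>i\<in>T. of_int (if i \<in> I then c i else 0) *\<^sub>R u i) = (\<Sum>i\<in>I. of_int (c i) *\<^sub>R u i)"
    using T(2) fan_finite_rays by (intro sum.mono_neutral_cong) auto
  also have "\<dots> = 0"
    using assms by (simp add: is_relation_def)
  finally have "of_int (if i \<in> I then c i else 0) = (0::real)" if "i \<in> T" for i
    by (rule unimodular_lincomb_eq_0[OF fan_max_cone_unimodular[OF T(1)] _ that])
  then show False
    using assms T(2) by (force simp: is_relation_def)
qed

lemma integral_vec_max_cone_coeffs:
  assumes "integral_vec v"
  obtains T d where "max_cone TYPE('n) C T" "\<forall>i\<in>T. 0 \<le> d i" "\<forall>i\<in>I - T. d i = 0"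
    "v = (\<Sum>i\<in>I. of_int (d i) *\<^sub>R u i)"
proof -
  obtain S where "S \<in> C" "v \<in> cone_gen u S"
    using fan_covers by blast
  then obtain T where T: "max_cone TYPE('n) C T" "S \<subseteq> T"
    using fan_cone_subset_max_cone by blast
  have TI: "T \<subseteq> I"
    using T(1) by (rule fan_max_cone_subset_rays)
  then have "v \<in> cone_gen u T"
    using cone_gen_mono[OF T(2)] \<open>v \<in> cone_gen u S\<close> fan_finite_rays finite_subset by blast
  then obtain d where d: "v = (\<Sum>i\<in>T. of_int (d i) *\<^sub>R u i)" "\<forall>i\<in>T. 0 \<le> d i"
    using unimodular_integral_cone_coeffs[OF fan_max_cone_unimodular[OF T(1)] assms] by blast
  define d' where "d' i = (if i \<in> T then d i else 0)" for i
  have "v = (\<Sum>i\<in>I. of_int (d' i) *\<^sub>R u i)"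
    using d(1) TI fan_finite_rays by (auto simp: d'_def intro!: sum.mono_neutral_cong_left)
  with d(2) show thesis
    by (intro that[OF T(1), of d']) (auto simp: d'_def)
qed

section \<open>Degrees of relations\<close>

text \<open>For a maximal cone T, the slack \<open>m\<^sub>D(T) \<bullet> u i + a i\<close> vanishes on T; it is
  nonnegative everywhere when D is globally generated and positive off T when D is ample.  Pairing
  a relation \<open>\<Sum> c u = \<Sum>\<^sub>T d u\<close> with \<open>m\<^sub>D(T)\<close> expresses the difference of the two
  degrees through these slacks.\<close>

lemma max_cone_degree_identity:
  assumes T: "max_cone TYPE('n) C T" and d: "\<forall>i\<in>I - T. d i = 0"
    and eq: "(\<Sum>i\<in>I. of_int (c i) *\<^sub>R u i) = (\<Sum>i\<in>I. of_int (d i) *\<^sub>R u i)"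
  shows "(\<Sum>i\<in>I. of_int (c i) * (mD u a T \<bullet> u i + of_int (a i)))
       = of_int (\<Sum>i\<in>I. c i * a i) - of_int (\<Sum>i\<in>I. d i * a i)"
proof -
  let ?m = "mD u a T"
  have "(\<Sum>i\<in>I. of_int (c i) * (?m \<bullet> u i)) = ?m \<bullet> (\<Sum>i\<in>I. of_int (c i) *\<^sub>R u i)"
    by (simp add: inner_sum_right)
  also have "\<dots> = (\<Sum>i\<in>I. of_int (d i) * (?m \<bullet> u i))"
    by (simp add: eq inner_sum_right)
  also have "\<dots> = (\<Sum>i\<in>I. - of_int (d i * a i))"
  proof (intro sum.cong refl)
    fix i assume "i \<in> I"
    then show "of_int (d i) * (?m \<bullet> u i) = - of_int (d i * a i)"
      using d mD_inner[OF fan_max_cone_unimodular[OF T], of i a] by (cases "i \<in> T") auto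
  qed
  finally show ?thesis
    by (simp add: distrib_left sum.distrib sum_negf)
qed

lemma max_cone_slack_nonneg:
  assumes gg: "globally_generated u I C a" and "max_cone TYPE('n) C T" and "i \<in> I"
  shows "0 \<le> mD u a T \<bullet> u i + of_int (a i)"
proof -
  have "- of_int (a i) \<le> mD u a T \<bullet> u i"
    using assms unfolding globally_generated_def by blast
  then show ?thesis
    by linarith
qed

lemma ample_slack_pos:
  assumes "ample u I C a" and "max_cone TYPE('n) C T" and "i \<in> I - T"
  shows "0 < mD u a T \<bullet> u i + of_int (a i)"
proof -
  have "- of_int (a i) < mD u a T \<bullet> u i"
    using assms unfolding ample_def by blast
  then show ?thesis
    by linarith
qed

lemma ample_imp_globally_generated:
  assumes "ample u I C a"
  shows "globally_generated u I C a"
  unfolding globally_generated_def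
proof (intro allI impI ballI)
  fix T i assume T: "max_cone TYPE('n) C T" and "i \<in> I"
  show "- of_int (a i) \<le> mD u a T \<bullet> u i"
  proof (cases "i \<in> T")
    case True
    then show ?thesis
      using mD_inner[OF fan_max_cone_unimodular[OF T]] by simp
  next
    case False
    then show ?thesis
      using ample_slack_pos[OF assms T] \<open>i \<in> I\<close> by fastforce
  qed
qed

lemma globally_generated_degree_le:
  assumes gg: "globally_generated u I C a" and T: "max_cone TYPE('n) C T"
    and d: "\<forall>i\<in>I - T. d i = 0"
    and eq: "(\<Sum>i\<in>I. of_int (c i) *\<^sub>R u i) = (\<Sum>i\<in>I. of_int (d i) *\<^sub>R u i)"
    and c: "\<forall>i\<in>I. 0 \<le> c i"
  shows "(\<Sum>i\<in>I. d i * a i) \<le> (\<Sum>i\<in>I. c i * a i)"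
proof -
  have "0 \<le> (\<Sum>i\<in>I. of_int (c i) * (mD u a T \<bullet> u i + of_int (a i)))"
    using c max_cone_slack_nonneg[OF gg T] by (intro sum_nonneg) simp
  then have "of_int (\<Sum>i\<in>I. d i * a i) \<le> (of_int (\<Sum>i\<in>I. c i * a i) :: real)"
    using max_cone_degree_identity[OF T d eq, of a] by linarith
  then show ?thesis
    by (simp only: of_int_le_iff)
qed

lemma ample_degree_less:
  assumes am: "ample u I C a" and T: "max_cone TYPE('n) C T"
    and d: "\<forall>i\<in>I - T. d i = 0"
    and eq: "(\<Sum>i\<in>I. of_int (c i) *\<^sub>R u i) = (\<Sum>i\<in>I. of_int (d i) *\<^sub>R u i)"
    and c: "\<forall>i\<in>I. 0 \<le> c i" and j: "j \<in> I - T" "0 < c j"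
  shows "(\<Sum>i\<in>I. d i * a i) < (\<Sum>i\<in>I. c i * a i)"
proof -
  have "0 < (\<Sum>i\<in>I. of_int (c i) * (mD u a T \<bullet> u i + of_int (a i)))"
  proof (rule sum_pos2[OF fan_finite_rays])
    show "j \<in> I" "0 < of_int (c j) * (mD u a T \<bullet> u j + of_int (a j))"
      using j ample_slack_pos[OF am T j(1)] by simp_all
    show "0 \<le> of_int (c i) * (mD u a T \<bullet> u i + of_int (a i))" if "i \<in> I" for i
      using that c max_cone_slack_nonneg[OF ample_imp_globally_generated[OF am] T] by simp
  qed
  then have "of_int (\<Sum>i\<in>I. d i * a i) < (of_int (\<Sum>i\<in>I. c i * a i) :: real)"
    using max_cone_degree_identity[OF T d eq, of a] by linarith
  then show ?thesis
    by (simp only: of_int_less_iff)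
qed

lemma globally_generated_relation_degree_nonneg:
  assumes gg: "globally_generated u I C a" and c: "\<forall>i\<in>I. 0 \<le> c i"
    and rel: "(\<Sum>i\<in>I. of_int (c i) *\<^sub>R u i) = 0"
  shows "0 \<le> (\<Sum>i\<in>I. c i * a i)"
  using globally_generated_degree_le[OF gg _ _ _ c, of _ "\<lambda>_. 0"] fan_max_cone_exists rel
  by auto

section \<open>Descent to centred primitive relations\<close>

lemma centred_collection_degree_le:
  assumes gg: "globally_generated u I C a"
    and c: "\<forall>i\<in>I. 0 \<le> c i" and rel: "(\<Sum>i\<in>I. of_int (c i) *\<^sub>R u i) = 0"
    and P: "P \<subseteq> I" "\<forall>i\<in>P. 1 \<le> c i" and centred: "(\<Sum>i\<in>P. u i) = 0"
  shows "(\<Sum>i\<in>P. a i) \<le> (\<Sum>i\<in>I. c i * a i)"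
proof -
  define c' where "c' i = c i - centred_rel P i" for i
  have "0 \<le> (\<Sum>i\<in>I. c' i * a i)"
  proof (rule globally_generated_relation_degree_nonneg[OF gg])
    show "\<forall>i\<in>I. 0 \<le> c' i"
      using c P(2) by (simp add: c'_def centred_rel_def)
    show "(\<Sum>i\<in>I. of_int (c' i) *\<^sub>R u i) = 0"
      using rel centred sum_centred_rel(1)[OF fan_finite_rays P(1), of u]
      by (simp add: c'_def scaleR_diff_left sum_subtractf)
  qed
  then show ?thesis
    using sum_centred_rel(2)[OF fan_finite_rays P(1)]
    by (simp add: c'_def left_diff_distrib sum_subtractf)
qed

lemma noncentred_collection_reduction:
  assumes gg: "globally_generated u I C a" and am: "ample u I C x"
    and c: "positive_relation u I c"
    and P: "primitive_collection I C P" "\<forall>i\<in>P. 1 \<le> c i"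
    and noncentred: "(\<Sum>i\<in>P. u i) \<noteq> 0"
  shows "\<exists>c'. positive_relation u I c' \<and> (\<Sum>i\<in>I. c' i * x i) < (\<Sum>i\<in>I. c i * x i)
           \<and> (\<Sum>i\<in>I. c' i * a i) \<le> (\<Sum>i\<in>I. c i * a i)"
proof -
  have PI: "P \<subseteq> I" and "P \<notin> C"
    using P(1) by (simp_all add: primitive_collection_def)
  have "integral_vec (\<Sum>i\<in>P. u i)"
    using PI fan_ray_primitive by (auto simp: integral_vec_def primitive_vec_def intro!: Ints_sum)
  then obtain T d where T: "max_cone TYPE('n) C T" and d: "\<forall>i\<in>T. 0 \<le> d i" "\<forall>i\<in>I - T. d i = 0"
    and v: "(\<Sum>i\<in>P. u i) = (\<Sum>i\<in>I. of_int (d i) *\<^sub>R u i)"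
    by (rule integral_vec_max_cone_coeffs)
  have d_nonneg: "\<forall>i\<in>I. 0 \<le> d i"
    using d by (metis DiffI order_refl)
  have c_ge: "\<forall>i\<in>I. centred_rel P i \<le> c i"
    using c P(2) by (simp add: centred_rel_def positive_relation_def)
  have P_eq: "(\<Sum>i\<in>I. of_int (centred_rel P i) *\<^sub>R u i) = (\<Sum>i\<in>I. of_int (d i) *\<^sub>R u i)"
    using v sum_centred_rel(1)[OF fan_finite_rays PI, of u] by simp
  have P_nonneg: "\<forall>i\<in>I. 0 \<le> centred_rel P i"
    by (simp add: centred_rel_def)
  obtain j where j: "j \<in> P" "j \<notin> T"
    using \<open>P \<notin> C\<close> fan_face_in_fan T by (auto simp: max_cone_def)
  define c' where "c' i = c i - centred_rel P i + d i" for i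
  have c'_sum: "(\<Sum>i\<in>I. c' i * f i) = (\<Sum>i\<in>I. c i * f i) - (\<Sum>i\<in>P. f i) + (\<Sum>i\<in>I. d i * f i)"
    for f :: "nat \<Rightarrow> int"
    using sum_centred_rel(2)[OF fan_finite_rays PI]
    by (simp add: c'_def algebra_simps sum.distrib sum_subtractf)
  have "positive_relation u I c'"
    unfolding positive_relation_def is_relation_def
  proof (intro conjI)
    show "(\<Sum>i\<in>I. of_int (c' i) *\<^sub>R u i) = 0"
      using c v sum_centred_rel(1)[OF fan_finite_rays PI, of u]
      by (simp add: c'_def positive_relation_def is_relation_def algebra_simps sum.distrib sum_subtractf)
    show "\<forall>i\<in>I. 0 \<le> c' i"
      using c_ge d_nonneg by (simp add: c'_def)
    have "\<exists>k\<in>I. d k \<noteq> 0"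
      using noncentred v sum.neutral[of I "\<lambda>i. of_int (d i) *\<^sub>R u i"] by auto
    then obtain k where k: "k \<in> I" "d k \<noteq> 0"
      by blast
    then have "0 < c' k"
      using c_ge d_nonneg unfolding c'_def by (metis add_nonneg_pos diff_ge_0_iff_ge order_less_le)
    then show "\<exists>i\<in>I. c' i \<noteq> 0"
      using k(1) by (intro bexI[of _ k]) auto
  qed
  moreover have "(\<Sum>i\<in>I. d i * x i) < (\<Sum>i\<in>P. x i)"
    using ample_degree_less[OF am T d(2) P_eq P_nonneg, of j] j subsetD[OF PI j(1)]
      sum_centred_rel(2)[OF fan_finite_rays PI] by (simp add: centred_rel_def)
  moreover have "(\<Sum>i\<in>I. d i * a i) \<le> (\<Sum>i\<in>P. a i)"
    using globally_generated_degree_le[OF gg T d(2) P_eq P_nonneg]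
      sum_centred_rel(2)[OF fan_finite_rays PI] by simp
  ultimately show ?thesis
    using c'_sum by (intro exI[of _ c']) simp
qed

lemma positive_relation_degree_ge_centred:
  assumes gg: "globally_generated u I C a" and am: "ample u I C x"
    and "positive_relation u I c"
  shows "\<exists>Q. centred_primitive_collection u I C Q \<and> (\<Sum>i\<in>Q. a i) \<le> (\<Sum>i\<in>I. c i * a i)"
  using \<open>positive_relation u I c\<close>
proof (induction "nat (\<Sum>i\<in>I. c i * x i)" arbitrary: c rule: less_induct)
  case less
  then have c: "\<forall>i\<in>I. 0 \<le> c i" "(\<Sum>i\<in>I. of_int (c i) *\<^sub>R u i) = 0"
    by (simp_all add: positive_relation_def is_relation_def)
  have "{i\<in>I. c i \<noteq> 0} \<notin> C"
    using relation_support_not_in_fan less.prems by (simp add: positive_relation_def)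
  then obtain P where P: "primitive_collection I C P" "P \<subseteq> {i\<in>I. c i \<noteq> 0}"
    using exists_primitive_collection_subset[of "{i\<in>I. c i \<noteq> 0}" I C] fan_finite_rays by auto
  have P_ge_1: "\<forall>i\<in>P. 1 \<le> c i"
    using P(2) c(1) by force
  show ?case
  proof (cases "(\<Sum>i\<in>P. u i) = 0")
    case True
    then show ?thesis
      using centred_collection_degree_le[OF gg c _ P_ge_1] P
      by (auto simp: centred_primitive_collection_def primitive_collection_def)
  next
    case False
    then obtain c' where c': "positive_relation u I c'"
      "(\<Sum>i\<in>I. c' i * x i) < (\<Sum>i\<in>I. c i * x i)" "(\<Sum>i\<in>I. c' i * a i) \<le> (\<Sum>i\<in>I. c i * a i)"
      using noncentred_collection_reduction[OF gg am less.prems P(1) P_ge_1] by blast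
    have "0 \<le> (\<Sum>i\<in>I. c' i * x i)"
      using globally_generated_relation_degree_nonneg[OF ample_imp_globally_generated[OF am]] c'(1)
      by (simp add: positive_relation_def is_relation_def)
    then obtain Q where "centred_primitive_collection u I C Q" "(\<Sum>i\<in>Q. a i) \<le> (\<Sum>i\<in>I. c' i * a i)"
      using less.hyps[OF _ c'(1)] c'(2) by fastforce
    then show ?thesis
      using c'(3) by auto
  qed
qed

lemma beta_le_degL_positive_relation:
  assumes gg: "globally_generated u I C a" and am: "ample u I C x"
    and c: "positive_relation u I c"
  shows "beta u I C a \<le> degL u I C a c"
proof -
  obtain Q where Q: "centred_primitive_collection u I C Q" "(\<Sum>i\<in>Q. a i) \<le> (\<Sum>i\<in>I. c i * a i)"
    using positive_relation_degree_ge_centred[OF gg am c] by blast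
  have QI: "Q \<subseteq> I"
    using Q(1) by (simp add: centred_primitive_collection_def primitive_collection_def)
  have "finite {degL u I C a (centred_rel P) | P. centred_primitive_collection u I C P}"
  proof (rule finite_subset)
    show "{degL u I C a (centred_rel P) | P. centred_primitive_collection u I C P}
          \<subseteq> (\<lambda>P. degL u I C a (centred_rel P)) ` Pow I"
      by (auto simp: centred_primitive_collection_def primitive_collection_def)
  qed (simp add: fan_finite_rays)
  then have "beta u I C a \<le> degL u I C a (centred_rel Q)"
    unfolding beta_def using Q(1) by (intro Min_le) auto
  also have "\<dots> \<le> degL u I C a c"
    using Q(2) by (simp only: degL_eq_sum sum_centred_rel(2)[OF fan_finite_rays QI] of_int_le_iff)
  finally show ?thesis .
qed

end

lemma sum_relation_coeffs:
  fixes f :: "nat \<Rightarrow> int \<Rightarrow> 'a::comm_monoid_add"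
  assumes "j \<in> {1..r}" and "\<And>k. f k 0 = 0"
  shows "(\<Sum>k\<in>{1..n+r}. f k (if k = n + j then 1 else if k \<in> {1..n} then b k j else 0))
       = f (n + j) 1 + (\<Sum>i=1..n. f i (b i j))"
proof -
  let ?g = "\<lambda>k. f k (if k = n + j then 1 else if k \<in> {1..n} then b k j else 0)"
  have split: "{1..n+r} = insert (n + j) ({1..n} \<union> ({n+1..n+r} - {n + j}))"
    using assms(1) by auto
  have "sum ?g {1..n+r} = ?g (n + j) + sum ?g ({1..n} \<union> ({n+1..n+r} - {n + j}))"
    unfolding split using assms(1) by (intro sum.insert) auto
  also have "sum ?g ({1..n} \<union> ({n+1..n+r} - {n + j})) = sum ?g {1..n} + sum ?g ({n+1..n+r} - {n + j})"
    by (rule sum.union_disjoint) auto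
  also have "sum ?g {1..n} = (\<Sum>i=1..n. f i (b i j))"
    using assms(1) by (intro sum.cong) auto
  also have "sum ?g ({n+1..n+r} - {n + j}) = 0"
    using assms(2) by (intro sum.neutral) auto
  finally show ?thesis
    by simp
qed

theorem mainTheorem9:
  fixes u :: "nat \<Rightarrow> real^'n" and C :: "nat set set" and r :: nat
    and a :: "nat \<Rightarrow> int" and b :: "nat \<Rightarrow> nat \<Rightarrow> int"
  defines "n \<equiv> CARD('n)"
  defines "P \<equiv> (\<lambda>j k. if k = n + j then 1 else if k \<in> {1..n} then b k j else (0::int))"
  assumes fan: "smooth_projective_fan u {1..n+r} C"
    and sigma0: "{1..n} \<in> C"
    and nonpos: "\<forall>j\<in>{1..r}. \<exists>c::nat \<Rightarrow> real. (\<forall>i\<in>{1..n}. c i \<le> 0) \<and>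
                   u (n + j) = (\<Sum>i=1..n. c i *\<^sub>R u i)"
    and rel: "\<forall>j\<in>{1..r}. u (n + j) + (\<Sum>i=1..n. of_int (b i j) *\<^sub>R u i) = 0"
  shows "(\<forall>j\<in>{1..r}. positive_relation u {1..n+r} (P j)) \<and>
         (globally_generated u {1..n+r} C a \<longrightarrow>
           (\<forall>j\<in>{1..r}.
              degL u {1..n+r} C a (P j) = of_int (a (n + j) + (\<Sum>i=1..n. a i * b i j)) \<and>
              degL u {1..n+r} C a (P j) \<ge> beta u {1..n+r} C a))"
proof -
  define I where "I = {1..n+r}"
  obtain x where fan': "smooth_complete_fan u I C" and am: "ample u I C x"
    using fan unfolding smooth_projective_fan_def I_def by blast
  have sigma0_unimodular: "unimodular u {1..n}"
    using fan_max_cone_unimodular[OF fan'] sigma0 by (simp add: max_cone_def n_def)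
  have b_nonneg: "0 \<le> b i j" if "i \<in> {1..n}" and j: "j \<in> {1..r}" for i j
    using unimodular_relation_coeffs_nonneg[OF sigma0_unimodular nonpos[rule_format, OF j]
        rel[rule_format, OF j] that(1)]
    by simp
  have P_relation: "positive_relation u I (P j)" if "j \<in> {1..r}" for j
  proof -
    have "(\<Sum>k\<in>I. of_int (P j k) *\<^sub>R u k) = 0"
      using sum_relation_coeffs[OF that, of "\<lambda>k z. of_int z *\<^sub>R u k" n b] rel that
      by (simp add: P_def I_def)
    moreover have "n + j \<in> I" and "P j (n + j) \<noteq> 0"
      using that by (auto simp: I_def P_def)
    moreover have "\<forall>k\<in>I. 0 \<le> P j k"
      using b_nonneg that by (simp add: P_def)
    ultimately show ?thesis
      unfolding positive_relation_def is_relation_def by blast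
  qed
  have P_degree: "degL u I C a (P j) = of_int (a (n + j) + (\<Sum>i=1..n. a i * b i j))"
    if "j \<in> {1..r}" for j
  proof -
    have "(\<Sum>k\<in>I. P j k * a k) = a (n + j) + (\<Sum>i=1..n. a i * b i j)"
      using sum_relation_coeffs[OF that, of "\<lambda>k z. z * a k" n b]
      by (simp add: P_def I_def mult.commute)
    then show ?thesis
      by (simp only: degL_eq_sum[OF fan'])
  qed
  have "beta u I C a \<le> degL u I C a (P j)"
    if "globally_generated u I C a" and "j \<in> {1..r}" for j
    using beta_le_degL_positive_relation[OF fan' that(1) am P_relation[OF that(2)]] .
  then show ?thesis
    using P_relation P_degree unfolding I_def by blast
qed

end
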